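(* Let $\Lambda$ be a row-finite $k$-graph with no sources and let $\{t_\lambda\}_{\lambda\in\Lambda}$ be a permutative representation of $C^*(\Lambda)$ with index set $I$, sets $J_\lambda,K_\lambda$ and bijections $\tilde\sigma_\lambda:J_\lambda\to K_\lambda$, and let $E:I\to\Lambda^\infty$ be its encoding map. Then: (a) For each $i\in I$ and $n\in\mathbb N^k$ there are a unique $\lambda\in\Lambda^n$ and a unique $i_n\in J_\lambda$ with $\tilde\sigma_\lambda(i_n)=i$. Writing $\tilde\sigma^n(i):=i_n$, we have $\tilde\sigma_\lambda\circ\tilde\sigma^n(i)=i$ for all $i\in K_\lambda$ and $\tilde\sigma^n\circ\tilde\sigma_\lambda(i)=i$ for all $i\in J_\lambda$. (b) $\sigma_\lambda(E(i))=E(\tilde\sigma_\lambda(i))$ for all $\lambda\in\Lambda$ and $i\in J_\lambda$, and $\sigma^n(E(i))=E(\tilde\sigma^n(i))$ for all $n\in\mathbb N^k$ and $i\in I$.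
   Context: A $k$-graph ($k\ge1$) is a countable small category $\Lambda$ with a functor $d:\Lambda\to\mathbb N^k$ satisfying unique factorization: if $d(\lambda)=m+n$ there are unique $\mu,\nu$ with $\lambda=\mu\nu$, $d(\mu)=m$, $d(\nu)=n$. $\Lambda^0$ = vertices, $r,s$ = range, source, $\Lambda^n=d^{-1}(n)$, $v\Lambda^n=\{\lambda\in\Lambda^n:r(\lambda)=v\}$, $s(\lambda)\Lambda=\{\nu:r(\nu)=s(\lambda)\}$; row-finite: each $v\Lambda^n$ finite; no sources: each $v\Lambda^n$ nonempty. Infinite paths are degree-preserving functors $x:\Omega_k\to\Lambda$, where $\Omega_k$ has objects $\mathbb N^k$, morphisms $(p,q)$, $p\le q$, $d(p,q)=q-p$; $\Lambda^\infty$ is their set, $r(x)=x(0,0)$. Shift: $\sigma^m(x)(p,q)=x(p+m,q+m)$. Prefixing: for $r(x)=s(\lambda)$, $\sigma_\lambda(x)=\lambda x$ is the unique $y\in\Lambda^\infty$ with $y(0,d(\lambda))=\lambda$ and $\sigma^{d(\lambda)}(y)=x$. A representation of $C^*(\Lambda)$ is a family of partial isometries $\{t_\lambda\}$ satisfying (CK1) $\{t_v\}$ mutually orthogonal projections, (CK2) $t_\lambda t_\eta=t_{\lambda\eta}$ when $s(\lambda)=r(\eta)$, (CK3) $t_\lambda^*t_\lambda=t_{s(\lambda)}$, (CK4) $t_v=\sum_{\lambda\in v\Lambda^n}t_\lambda t_\lambda^*$. It is permutative if the Hilbert space has an orthonormal basis $\{e_i\}_{i\in I}$ such that for each $\lambda$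 there are $J_\lambda,K_\lambda\subseteq I$ and a bijection $\tilde\sigma_\lambda:J_\lambda\to K_\lambda$ with: (a) for each $n$, $\bigcup_{\lambda\in\Lambda^n}J_\lambda=\bigcup_{\lambda\in\Lambda^n}K_\lambda=I$; (b) for $\lambda\in\Lambda,\nu\in s(\lambda)\Lambda$: $K_\nu\subseteq J_\lambda$ and $\tilde\sigma_\lambda\circ\tilde\sigma_\nu=\tilde\sigma_{\lambda\nu}$; (c) $t_\lambda e_i=e_{\tilde\sigma_\lambda(i)}$ for $i\in J_\lambda$, $t_\lambda e_i=0$ otherwise; (d) $t_\lambda^*e_{\tilde\sigma_\lambda(i)}=e_i$ for $i\in J_\lambda$, and $t_\lambda^*e_j=0$ for $j\in K_{\lambda'}$ when $\lambda'\ne\lambda$, $d(\lambda')=d(\lambda)$. For such a representation the sets $K_\lambda$, $\lambda\in\Lambda^n$, partition $I$, and the encoding map $E:I\to\Lambda^\infty$ is the infinite path with $E(i)(0,n)=$ the unique $\lambda\in\Lambda^n$ with $i\in K_\lambda$. *)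

theory Defs
  imports "HOL-Analysis.Analysis" "HOL-Library.Function_Algebras"
begin

text \<open>A k-graph is given by its set of morphisms L, range and source maps r, s (objects
are identified with the identity morphisms), composition c (c x y is defined when
s x = r y) and the degree functor d into N^k, where N^k is modelled as 'k => nat
for a finite index type 'k (k = CARD('k) >= 1), with pointwise order and addition.\<close>

definition k_graph ::
  "'a set \<Rightarrow> ('a \<Rightarrow> 'a) \<Rightarrow> ('a \<Rightarrow> 'a) \<Rightarrow> ('a \<Rightarrow> 'a \<Rightarrow> 'a) \<Rightarrow> ('a \<Rightarrow> 'k::finite \<Rightarrow> nat) \<Rightarrow> bool"
  where "k_graph L r s c d \<longleftrightarrow>
    countable L \<and>
    (\<forall>x\<in>L. r x \<in> L \<and> s x \<in> L \<and> r (r x) = r x \<and> s (r x) = r x \<and>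
             r (s x) = s x \<and> s (s x) = s x \<and> c (r x) x = x \<and> c x (s x) = x) \<and>
    (\<forall>x\<in>L. \<forall>y\<in>L. s x = r y \<longrightarrow> c x y \<in> L \<and> r (c x y) = r x \<and> s (c x y) = s y) \<and>
    (\<forall>x\<in>L. \<forall>y\<in>L. \<forall>z\<in>L. s x = r y \<and> s y = r z \<longrightarrow> c (c x y) z = c x (c y z)) \<and>
    (\<forall>x\<in>L. d (r x) = 0) \<and>
    (\<forall>x\<in>L. \<forall>y\<in>L. s x = r y \<longrightarrow> d (c x y) = d x + d y) \<and>
    (\<forall>x\<in>L. \<forall>m n. d x = m + n \<longrightarrow>
       (\<exists>!p. fst p \<in> L \<and> snd p \<in> L \<and> s (fst p) = r (snd p) \<and>
             c (fst p) (snd p) = x \<and> d (fst p) = m \<and> d (snd p) = n))"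

definition vertices :: "'a set \<Rightarrow> ('a \<Rightarrow> 'a) \<Rightarrow> 'a set"
  where "vertices L r = r ` L"

definition row_finite :: "'a set \<Rightarrow> ('a \<Rightarrow> 'a) \<Rightarrow> ('a \<Rightarrow> 'k \<Rightarrow> nat) \<Rightarrow> bool"
  where "row_finite L r d \<longleftrightarrow>
    (\<forall>v\<in>vertices L r. \<forall>n. finite {x\<in>L. r x = v \<and> d x = n})"

definition no_sources :: "'a set \<Rightarrow> ('a \<Rightarrow> 'a) \<Rightarrow> ('a \<Rightarrow> 'k \<Rightarrow> nat) \<Rightarrow> bool"
  where "no_sources L r d \<longleftrightarrow>
    (\<forall>v\<in>vertices L r. \<forall>n. {x\<in>L. r x = v \<and> d x = n} \<noteq> {})"

text \<open>Infinite paths: degree preserving functors Omega_k -> L. A path is a function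
x p q defined on pairs p <= q (the morphisms (p,q) of Omega_k); outside this domain
it is normalised to undefined, so that paths are equal iff they agree on Omega_k.\<close>
definition inf_paths ::
  "'a set \<Rightarrow> ('a \<Rightarrow> 'a) \<Rightarrow> ('a \<Rightarrow> 'a) \<Rightarrow> ('a \<Rightarrow> 'a \<Rightarrow> 'a) \<Rightarrow> ('a \<Rightarrow> 'k::finite \<Rightarrow> nat)
     \<Rightarrow> (('k \<Rightarrow> nat) \<Rightarrow> ('k \<Rightarrow> nat) \<Rightarrow> 'a) set"
  where "inf_paths L r s c d = {x.
    (\<forall>p q. \<not> p \<le> q \<longrightarrow> x p q = undefined) \<and>
    (\<forall>p q. p \<le> q \<longrightarrow> x p q \<in> L \<and> d (x p q) = q - p) \<and>
    (\<forall>p. r (x p p) = x p p) \<and>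
    (\<forall>p q m. p \<le> q \<and> q \<le> m \<longrightarrow> s (x p q) = r (x q m) \<and> c (x p q) (x q m) = x p m)}"

definition shift :: "('k \<Rightarrow> nat) \<Rightarrow> (('k \<Rightarrow> nat) \<Rightarrow> ('k \<Rightarrow> nat) \<Rightarrow> 'a)
     \<Rightarrow> (('k \<Rightarrow> nat) \<Rightarrow> ('k \<Rightarrow> nat) \<Rightarrow> 'a)"
  where "shift m x = (\<lambda>p q. x (p + m) (q + m))"

definition prefix ::
  "'a set \<Rightarrow> ('a \<Rightarrow> 'a) \<Rightarrow> ('a \<Rightarrow> 'a) \<Rightarrow> ('a \<Rightarrow> 'a \<Rightarrow> 'a) \<Rightarrow> ('a \<Rightarrow> 'k::finite \<Rightarrow> nat)
     \<Rightarrow> 'a \<Rightarrow> (('k \<Rightarrow> nat) \<Rightarrow> ('k \<Rightarrow> nat) \<Rightarrow> 'a) \<Rightarrow> (('k \<Rightarrow> nat) \<Rightarrow> ('k \<Rightarrow> nat) \<Rightarrow> 'a)"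
  where "prefix L r s c d lam x =
    (THE y. y \<in> inf_paths L r s c d \<and> y 0 (d lam) = lam \<and> shift (d lam) y = x)"

text \<open>Permutative representation: basis e indexed by I, operators t lam and their
adjoints tstar lam acting on a vector space 'h (only the action on the basis matters).\<close>
definition permutative_rep ::
  "'a set \<Rightarrow> ('a \<Rightarrow> 'a) \<Rightarrow> ('a \<Rightarrow> 'a) \<Rightarrow> ('a \<Rightarrow> 'a \<Rightarrow> 'a) \<Rightarrow> ('a \<Rightarrow> 'k::finite \<Rightarrow> nat)
     \<Rightarrow> 'i set \<Rightarrow> ('a \<Rightarrow> 'i set) \<Rightarrow> ('a \<Rightarrow> 'i set) \<Rightarrow> ('a \<Rightarrow> 'i \<Rightarrow> 'i)
     \<Rightarrow> ('i \<Rightarrow> 'h::zero) \<Rightarrow> ('a \<Rightarrow> 'h \<Rightarrow> 'h) \<Rightarrow> ('a \<Rightarrow> 'h \<Rightarrow> 'h) \<Rightarrow> bool"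
  where "permutative_rep L r s c d I J K st e t tstar \<longleftrightarrow>
    inj_on e I \<and> (\<forall>i\<in>I. e i \<noteq> 0) \<and>
    (\<forall>x\<in>L. J x \<subseteq> I \<and> K x \<subseteq> I \<and> bij_betw (st x) (J x) (K x)) \<and>
    (\<forall>n. (\<Union>x\<in>{x\<in>L. d x = n}. J x) = I \<and> (\<Union>x\<in>{x\<in>L. d x = n}. K x) = I) \<and>
    (\<forall>x\<in>L. \<forall>y\<in>L. r y = s x \<longrightarrow>
        K y \<subseteq> J x \<and> J (c x y) = J y \<and> (\<forall>i\<in>J y. st x (st y i) = st (c x y) i)) \<and>
    (\<forall>x\<in>L. \<forall>i\<in>I. t x (e i) = (if i \<in> J x then e (st x i) else 0)) \<and>
    (\<forall>x\<in>L. (\<forall>i\<in>J x. tstar x (e (st x i)) = e i) \<and>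
       (\<forall>y\<in>L. y \<noteq> x \<and> d y = d x \<longrightarrow> (\<forall>j\<in>K y. tstar x (e j) = 0)))"

definition encoding ::
  "'a set \<Rightarrow> ('a \<Rightarrow> 'a) \<Rightarrow> ('a \<Rightarrow> 'a) \<Rightarrow> ('a \<Rightarrow> 'a \<Rightarrow> 'a) \<Rightarrow> ('a \<Rightarrow> 'k::finite \<Rightarrow> nat)
     \<Rightarrow> ('a \<Rightarrow> 'i set) \<Rightarrow> 'i \<Rightarrow> (('k \<Rightarrow> nat) \<Rightarrow> ('k \<Rightarrow> nat) \<Rightarrow> 'a)"
  where "encoding L r s c d K i =
    (THE x. x \<in> inf_paths L r s c d \<and>
        (\<forall>n. x 0 n = (THE y. y \<in> L \<and> d y = n \<and> i \<in> K y)))"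

definition sigma_tilde_n ::
  "'a set \<Rightarrow> ('a \<Rightarrow> 'k \<Rightarrow> nat) \<Rightarrow> ('a \<Rightarrow> 'i set) \<Rightarrow> ('a \<Rightarrow> 'i \<Rightarrow> 'i) \<Rightarrow> ('k \<Rightarrow> nat) \<Rightarrow> 'i \<Rightarrow> 'i"
  where "sigma_tilde_n L d J st n i =
    snd (THE p. fst p \<in> L \<and> d (fst p) = n \<and> snd p \<in> J (fst p) \<and> st (fst p) (snd p) = i)"

end

theory Submission
  imports Defs
begin

(* For fixed n the sets K x with d x = n cover I, and they are pairwise disjoint because
   tstar x sends e (st x j) to e j but kills the basis vectors indexed by K y for every
   other y of the same degree.  So every i in I has a unique label of each degree n, which
   already gives (a).  Since K (c x y) = st x ` K y is contained in K x, the label of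
   degree p is a prefix of the label of degree q whenever p <= q, and unique factorisation
   assembles these labels into an infinite path, the encoding of i.
   For (b): if i = st x j, the label of i of degree n + d x is x followed by the label of j
   of degree n, so shifting the encoding of i by d x gives the encoding of j; prefixing by
   x inverts this shift. *)

lemma fun_zero_le: "0 \<le> (f :: 'a \<Rightarrow> 'b::canonically_ordered_monoid_add)"
  by (simp add: le_fun_def)

lemma fun_add_diff_inverse:
  "f \<le> g \<Longrightarrow> f + (g - f) = (g :: 'a \<Rightarrow> 'b::ordered_cancel_comm_monoid_diff)"
  unfolding le_fun_def fun_eq_iff
  by (simp add: ordered_cancel_comm_monoid_diff_class.add_diff_inverse)

lemma shift_in_inf_paths:
  assumes "y \<in> inf_paths L r s c d"
  shows "shift m y \<in> inf_paths L r s c d"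
  using assms unfolding inf_paths_def shift_def by auto

locale higher_rank_graph =
  fixes L :: "'a set" and r s :: "'a \<Rightarrow> 'a" and c :: "'a \<Rightarrow> 'a \<Rightarrow> 'a"
    and d :: "'a \<Rightarrow> 'k::finite \<Rightarrow> nat"
  assumes k_graph: "k_graph L r s c d"
begin

lemma
  assumes "x \<in> L"
  shows range_in: "r x \<in> L" and source_in: "s x \<in> L"
    and range_source: "r (s x) = s x" and source_range: "s (r x) = r x"
    and comp_range_left: "c (r x) x = x" and comp_source_right: "c x (s x) = x"
    and degree_range: "d (r x) = 0"
  using assms k_graph unfolding k_graph_def by blast+

lemma
  assumes "x \<in> L" "y \<in> L" "s x = r y"
  shows comp_in: "c x y \<in> L" and range_comp: "r (c x y) = r x"
    and source_comp: "s (c x y) = s y" and degree_comp: "d (c x y) = d x + d y"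
  using assms k_graph unfolding k_graph_def by blast+

lemma comp_assoc:
  "\<lbrakk>x \<in> L; y \<in> L; z \<in> L; s x = r y; s y = r z\<rbrakk> \<Longrightarrow> c (c x y) z = c x (c y z)"
  using k_graph unfolding k_graph_def by blast

lemma unique_factorisation:
  "\<lbrakk>x \<in> L; d x = m + n\<rbrakk> \<Longrightarrow> \<exists>!p. fst p \<in> L \<and> snd p \<in> L \<and> s (fst p) = r (snd p) \<and>
      c (fst p) (snd p) = x \<and> d (fst p) = m \<and> d (snd p) = n"
  using k_graph unfolding k_graph_def by blast

lemma factorisation_exists:
  assumes "x \<in> L" "d x = m + n"
  obtains a b where "a \<in> L" "b \<in> L" "s a = r b" "c a b = x" "d a = m" "d b = n"
  using unique_factorisation[OF assms] by auto

lemma factorisation_unique: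
  assumes "a \<in> L" "b \<in> L" "a' \<in> L" "b' \<in> L" "s a = r b" "s a' = r b'"
    and "c a b = c a' b'" "d a = d a'" "d b = d b'"
  shows "a = a'" "b = b'"
proof -
  have "c a b \<in> L" "d (c a b) = d a + d b"
    using assms comp_in degree_comp by auto
  from unique_factorisation[OF this] have "(a, b) = (a', b')"
    using assms by (metis fst_conv snd_conv)
  then show "a = a'" "b = b'" by simp_all
qed

lemma comp_left_cancel:
  assumes "a \<in> L" "b \<in> L" "b' \<in> L" "s a = r b" "s a = r b'" and "c a b = c a b'"
  shows "b = b'"
proof -
  have "d a + d b = d a + d b'"
    using assms degree_comp by metis
  then show ?thesis
    using factorisation_unique(2)[OF assms(1,2,1,3-6)] by simp
qed

abbreviation paths where "paths \<equiv> inf_paths L r s c d"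

lemma
  assumes "y \<in> paths" "p \<le> q"
  shows inf_path_in: "y p q \<in> L" and inf_path_degree: "d (y p q) = q - p"
  using assms unfolding inf_paths_def by blast+

lemma
  assumes "y \<in> paths" "p \<le> q" "q \<le> m"
  shows inf_path_source: "s (y p q) = r (y q m)"
    and inf_path_comp: "c (y p q) (y q m) = y p m"
  using assms unfolding inf_paths_def by blast+

lemma inf_path_segment_eq:
  assumes y: "y \<in> paths" and z: "z \<in> paths" and pq: "p \<le> q" and eq: "y 0 q = z 0 q"
  shows "y 0 p = z 0 p" "y p q = z p q"
proof -
  have p: "0 \<le> p" by (rule fun_zero_le)
  have "c (y 0 p) (y p q) = c (z 0 p) (z p q)"
    using inf_path_comp[OF y p pq] inf_path_comp[OF z p pq] eq by simp
  moreover have "d (y 0 p) = d (z 0 p)" "d (y p q) = d (z p q)"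
    using inf_path_degree[OF y] inf_path_degree[OF z] p pq by simp_all
  ultimately show "y 0 p = z 0 p" "y p q = z p q"
    using factorisation_unique[OF inf_path_in[OF y p] inf_path_in[OF y pq]
        inf_path_in[OF z p] inf_path_in[OF z pq]
        inf_path_source[OF y p pq] inf_path_source[OF z p pq]]
    by simp_all
qed

lemma inf_path_eqI:
  assumes y: "y \<in> paths" and z: "z \<in> paths" and "\<And>n. y 0 n = z 0 n"
  shows "y = z"
proof (intro ext)
  fix p q
  show "y p q = z p q"
  proof (cases "p \<le> q")
    case True
    then show ?thesis using inf_path_segment_eq(2)[OF y z True] assms(3) by simp
  next
    case False
    then show ?thesis using y z unfolding inf_paths_def by simp
  qed
qed

definition path_of_initial_segments :: "(('k \<Rightarrow> nat) \<Rightarrow> 'a) \<Rightarrow> ('k \<Rightarrow> nat) \<Rightarrow> ('k \<Rightarrow> nat) \<Rightarrow> 'a"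
  where "path_of_initial_segments f p q =
    (if p \<le> q then THE \<mu>. \<mu> \<in> L \<and> s (f p) = r \<mu> \<and> c (f p) \<mu> = f q else undefined)"

lemma
  assumes f_in: "\<And>q. f q \<in> L" and f_degree: "\<And>q. d (f q) = q"
    and f_extends: "\<And>p q. p \<le> q \<Longrightarrow> \<exists>\<mu>\<in>L. s (f p) = r \<mu> \<and> c (f p) \<mu> = f q"
  shows path_of_initial_segments_in_inf_paths: "path_of_initial_segments f \<in> paths"
    and path_of_initial_segments_initial: "path_of_initial_segments f 0 q = f q"
proof -
  define x where "x = path_of_initial_segments f"
  have seg_eq: "x p q = \<mu>" if "p \<le> q" "\<mu> \<in> L" "s (f p) = r \<mu>" "c (f p) \<mu> = f q" for p q \<mu>
    unfolding x_def path_of_initial_segments_def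
    using that comp_left_cancel[OF f_in] by auto
  have seg: "x p q \<in> L" "s (f p) = r (x p q)" "c (f p) (x p q) = f q" if "p \<le> q" for p q
    using f_extends[OF that] seg_eq[OF that] by auto
  have seg_degree: "d (x p q) = q - p" if "p \<le> q" for p q
    using degree_comp[OF f_in seg(1,2)[OF that]] seg(3)[OF that] f_degree
    by (metis add_diff_cancel_left')
  have seg_diag: "x p p = s (f p)" for p
    using seg_eq f_in source_in range_source comp_source_right by simp
  have seg_comp: "s (x p q) = r (x q m) \<and> c (x p q) (x q m) = x p m"
    if "p \<le> q" "q \<le> m" for p q m
  proof
    show source: "s (x p q) = r (x q m)"
      using seg that source_comp[OF f_in seg(1,2)] by metis
    have "c (f p) (c (x p q) (x q m)) = f m"
      using comp_assoc[OF f_in seg(1)[OF that(1)] seg(1)[OF that(2)] seg(2)[OF that(1)] source]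
        seg(3) that by simp
    then show "c (x p q) (x q m) = x p m"
      using seg_eq[OF order_trans[OF that]] comp_in range_comp seg that source by metis
  qed
  show "x \<in> paths"
    unfolding inf_paths_def
    using seg(1) seg_degree seg_diag seg_comp f_in range_source
    by (auto simp: x_def path_of_initial_segments_def)
  have "0 \<le> q" by (rule fun_zero_le)
  have "c (r (f q)) (f q) = c (f 0) (x 0 q)" "d (r (f q)) = d (f 0)" "d (f q) = d (x 0 q)"
    using comp_range_left seg(3) degree_range seg_degree f_in f_degree \<open>0 \<le> q\<close> by simp_all
  then show "x 0 q = f q"
    using factorisation_unique(2)[of "r (f q)" "f q" "f 0" "x 0 q"]
      range_in source_range f_in seg(1,2)[OF \<open>0 \<le> q\<close>] by simp
qed

lemma prefix_eqI:
  assumes z: "z \<in> paths" "z 0 (d x) = x" "shift (d x) z = y"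
  shows "prefix L r s c d x y = z"
  unfolding prefix_def
proof (rule the_equality)
  show "z \<in> paths \<and> z 0 (d x) = x \<and> shift (d x) z = y" using z by blast
next
  have agree: "w 0 (n + d x) = c x (y 0 n)"
    if "w \<in> paths" "w 0 (d x) = x" "shift (d x) w = y" for w n
    using inf_path_comp[OF that(1) fun_zero_le, of "d x" "n + d x"] that fun_zero_le
    by (auto simp: shift_def add_increasing)
  fix w assume w: "w \<in> paths \<and> w 0 (d x) = x \<and> shift (d x) w = y"
  show "w = z"
  proof (rule inf_path_eqI)
    fix n
    have "n \<le> n + d x"
      by (rule add_increasing2[OF fun_zero_le order_refl])
    then show "w 0 n = z 0 n"
      using inf_path_segment_eq(1)[of w z] agree[of w n] agree[OF z, of n] w z by simp
  qed (use w z in blast)+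
qed

end

locale permutative_representation = higher_rank_graph L r s c d
  for L :: "'a set" and r s :: "'a \<Rightarrow> 'a" and c :: "'a \<Rightarrow> 'a \<Rightarrow> 'a"
    and d :: "'a \<Rightarrow> 'k::finite \<Rightarrow> nat" +
  fixes I :: "'i set" and J K :: "'a \<Rightarrow> 'i set" and st :: "'a \<Rightarrow> 'i \<Rightarrow> 'i"
    and e :: "'i \<Rightarrow> 'h::zero" and t tstar :: "'a \<Rightarrow> 'h \<Rightarrow> 'h"
  assumes permutative: "permutative_rep L r s c d I J K st e t tstar"
begin

lemma
  assumes "x \<in> L"
  shows J_subset: "J x \<subseteq> I" and K_subset: "K x \<subseteq> I"
    and bij_st: "bij_betw (st x) (J x) (K x)"
  using assms permutative by (simp_all add: permutative_rep_def)

lemma K_cover: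
  assumes "i \<in> I"
  shows "\<exists>x\<in>L. d x = n \<and> i \<in> K x"
proof -
  have "(\<Union>x\<in>{x\<in>L. d x = n}. K x) = I"
    using permutative unfolding permutative_rep_def by (elim conjE) simp
  then show ?thesis using assms by blast
qed

lemma
  assumes "x \<in> L" "y \<in> L" "s x = r y"
  shows K_subset_J: "K y \<subseteq> J x" and J_comp: "J (c x y) = J y"
    and st_comp: "i \<in> J y \<Longrightarrow> st x (st y i) = st (c x y) i"
  using assms permutative by (simp_all add: permutative_rep_def)

lemma basis_nonzero: "i \<in> I \<Longrightarrow> e i \<noteq> 0"
  using permutative by (simp add: permutative_rep_def)

lemma
  assumes "x \<in> L"
  shows tstar_st: "j \<in> J x \<Longrightarrow> tstar x (e (st x j)) = e j"
    and tstar_K: "\<lbrakk>y \<in> L; y \<noteq> x; d y = d x; j \<in> K y\<rbrakk> \<Longrightarrow> tstar x (e j) = 0"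
  using assms permutative by (simp_all add: permutative_rep_def)

lemma K_disjoint:
  assumes x: "x \<in> L" and y: "y \<in> L" "d x = d y" and i: "i \<in> K x" "i \<in> K y"
  shows "x = y"
proof (rule ccontr)
  obtain j where j: "j \<in> J x" "i = st x j"
    using bij_st[OF x] i(1) by (metis bij_betw_imp_surj_on imageE)
  assume "x \<noteq> y"
  then have "tstar x (e i) = 0"
    using tstar_K[OF x y(1)] y(2) i(2) by simp
  then show False
    using tstar_st[OF x j(1)] basis_nonzero J_subset[OF x] j by auto
qed

lemma K_comp:
  assumes "x \<in> L" "y \<in> L" "s x = r y"
  shows "K (c x y) = st x ` K y"
proof -
  have "K (c x y) = st (c x y) ` J y"
    using bij_st[OF comp_in[OF assms]] J_comp[OF assms] by (simp add: bij_betw_def)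
  also have "\<dots> = st x ` st y ` J y"
    using st_comp[OF assms] by (simp add: image_image)
  also have "\<dots> = st x ` K y"
    using bij_st[OF assms(2)] by (simp add: bij_betw_def)
  finally show ?thesis .
qed

lemma K_comp_subset:
  assumes "x \<in> L" "y \<in> L" "s x = r y"
  shows "K (c x y) \<subseteq> K x"
  using K_comp[OF assms] K_subset_J[OF assms] bij_st[OF assms(1)]
  by (auto simp: bij_betw_def)

definition label :: "'i \<Rightarrow> ('k \<Rightarrow> nat) \<Rightarrow> 'a"
  where "label i n = (THE x. x \<in> L \<and> d x = n \<and> i \<in> K x)"

lemma label_unique: "i \<in> I \<Longrightarrow> \<exists>!x. x \<in> L \<and> d x = n \<and> i \<in> K x"
  using K_cover K_disjoint by metis

lemma
  assumes "i \<in> I"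
  shows label_in: "label i n \<in> L" and degree_label: "d (label i n) = n"
    and in_K_label: "i \<in> K (label i n)"
  using theI'[OF label_unique[OF assms]] unfolding label_def by blast+

lemma label_eq: "\<lbrakk>x \<in> L; i \<in> K x\<rbrakk> \<Longrightarrow> label i (d x) = x"
  unfolding label_def using K_subset label_unique by (blast intro: the1_equality)

lemma label_extends:
  assumes i: "i \<in> I" and "p \<le> q"
  shows "\<exists>\<mu>\<in>L. s (label i p) = r \<mu> \<and> c (label i p) \<mu> = label i q"
proof -
  obtain a b where ab: "a \<in> L" "b \<in> L" "s a = r b" "c a b = label i q" "d a = p"
    using factorisation_exists[OF label_in[OF i]] degree_label[OF i]
      fun_add_diff_inverse[OF \<open>p \<le> q\<close>] by metis
  have "i \<in> K a"
    using K_comp_subset[OF ab(1-3)] ab(4) in_K_label[OF i, of q] by auto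
  then have "label i p = a"
    using label_eq ab by metis
  then show ?thesis using ab by blast
qed

abbreviation E where "E \<equiv> encoding L r s c d K"

lemma
  assumes "i \<in> I"
  shows path_of_labels_in_inf_paths: "path_of_initial_segments (label i) \<in> paths"
    and path_of_labels_initial: "path_of_initial_segments (label i) 0 n = label i n"
  using assms label_in degree_label label_extends
  by (auto intro: path_of_initial_segments_in_inf_paths path_of_initial_segments_initial)

lemma encoding_eqI:
  assumes i: "i \<in> I" and w: "w \<in> paths" "\<And>n. w 0 n = label i n"
  shows "E i = w"
proof -
  have "\<exists>!x. x \<in> paths \<and> (\<forall>n. x 0 n = label i n)"
    using path_of_labels_in_inf_paths[OF i] path_of_labels_initial[OF i] inf_path_eqI by metis
  then show ?thesis
    unfolding encoding_def label_def[symmetric] using w by (blast intro: the1_equality)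
qed

lemma
  assumes "i \<in> I"
  shows encoding_in_inf_paths: "E i \<in> paths" and encoding_initial: "E i 0 n = label i n"
  using encoding_eqI[OF assms path_of_labels_in_inf_paths[OF assms]]
    path_of_labels_in_inf_paths[OF assms] path_of_labels_initial[OF assms] by simp_all

lemma shift_encoding_st:
  assumes x: "x \<in> L" and j: "j \<in> J x"
  shows "shift (d x) (E (st x j)) = E j"
proof -
  let ?i = "st x j" and ?z = "E (st x j)"
  have i: "?i \<in> K x" "?i \<in> I"
    using bij_st[OF x] K_subset[OF x] j by (auto simp: bij_betw_def)
  have z: "?z \<in> paths" "?z 0 (d x) = x"
    using encoding_in_inf_paths[OF i(2)] encoding_initial[OF i(2)] label_eq[OF x i(1)] by auto
  have "shift (d x) ?z 0 n = label j n" for n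
  proof -
    let ?v = "?z (d x) (n + d x)"
    have le: "0 \<le> d x" "d x \<le> n + d x"
      by (simp_all add: fun_zero_le add_increasing)
    have v: "?v \<in> L" "d ?v = n" "s x = r ?v" "c x ?v = ?z 0 (n + d x)"
      using inf_path_in[OF z(1) le(2)] inf_path_degree[OF z(1) le(2)]
        inf_path_source[OF z(1) le] inf_path_comp[OF z(1) le] z(2) by auto
    have "?i \<in> st x ` K ?v"
      using K_comp[OF x v(1,3)] v(4) encoding_initial[OF i(2)] in_K_label[OF i(2)] by metis
    then have "j \<in> K ?v"
      using K_subset_J[OF x v(1,3)] bij_st[OF x] j by (auto simp: bij_betw_def dest: inj_onD)
    then show ?thesis
      using label_eq[OF v(1)] v(2) by (simp add: shift_def)
  qed
  then have "E j = shift (d x) ?z"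
    by (rule encoding_eqI[OF subsetD[OF J_subset[OF x] j] shift_in_inf_paths[OF z(1)]])
  then show ?thesis by simp
qed

lemma prefix_encoding:
  assumes x: "x \<in> L" and j: "j \<in> J x"
  shows "prefix L r s c d x (E j) = E (st x j)"
proof (rule prefix_eqI)
  have i: "st x j \<in> K x" "st x j \<in> I"
    using bij_st[OF x] K_subset[OF x] j by (auto simp: bij_betw_def)
  show "E (st x j) \<in> paths" "E (st x j) 0 (d x) = x"
    using encoding_in_inf_paths[OF i(2)] encoding_initial[OF i(2)] label_eq[OF x i(1)] by auto
  show "shift (d x) (E (st x j)) = E j"
    using shift_encoding_st[OF x j] .
qed

lemma st_preimage_unique:
  assumes i: "i \<in> I"
  shows "\<exists>!p. fst p \<in> L \<and> d (fst p) = n \<and> snd p \<in> J (fst p) \<and> st (fst p) (snd p) = i"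
proof -
  let ?x = "label i n"
  obtain j where j: "j \<in> J ?x" "st ?x j = i"
    using bij_st[OF label_in[OF i]] in_K_label[OF i] by (metis bij_betw_imp_surj_on imageE)
  show ?thesis
  proof (rule ex1I[of _ "(?x, j)"])
    show "fst (?x, j) \<in> L \<and> d (fst (?x, j)) = n \<and> snd (?x, j) \<in> J (fst (?x, j))
        \<and> st (fst (?x, j)) (snd (?x, j)) = i"
      using label_in[OF i] degree_label[OF i] j by simp
  next
    fix p assume p: "fst p \<in> L \<and> d (fst p) = n \<and> snd p \<in> J (fst p) \<and> st (fst p) (snd p) = i"
    then have "i \<in> K (fst p)"
      using bij_st by (metis bij_betwE)
    then have "fst p = ?x"
      using label_eq p by metis
    moreover have "snd p = j"
      using bij_betw_imp_inj_on[OF bij_st[OF label_in[OF i]]] j p calculation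
      by (metis inj_onD)
    ultimately show "p = (?x, j)" by (simp add: prod_eq_iff)
  qed
qed

lemma sigma_tilde_n_st:
  assumes x: "x \<in> L" and j: "j \<in> J x"
  shows "sigma_tilde_n L d J st (d x) (st x j) = j"
proof -
  have "st x j \<in> I"
    using bij_st[OF x] K_subset[OF x] j by (auto simp: bij_betw_def)
  from the1_equality[OF st_preimage_unique[OF this], of "(x, j)"] x j
  show ?thesis unfolding sigma_tilde_n_def by simp
qed

lemma st_sigma_tilde_n:
  assumes x: "x \<in> L" and i: "i \<in> K x"
  shows "st x (sigma_tilde_n L d J st (d x) i) = i"
proof -
  obtain j where "j \<in> J x" "i = st x j"
    using bij_st[OF x] i by (metis bij_betw_imp_surj_on imageE)
  then show ?thesis using sigma_tilde_n_st[OF x] by simp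
qed

lemma shift_encoding:
  assumes i: "i \<in> I"
  shows "shift n (E i) = E (sigma_tilde_n L d J st n i)"
proof -
  let ?x = "label i n"
  obtain j where j: "j \<in> J ?x" "i = st ?x j"
    using bij_st[OF label_in[OF i]] in_K_label[OF i] by (metis bij_betw_imp_surj_on imageE)
  then show ?thesis
    using shift_encoding_st[OF label_in[OF i] j(1)] sigma_tilde_n_st[OF label_in[OF i] j(1)]
      degree_label[OF i] by simp
qed

end

theorem proposition4p3:
  fixes L :: "'a set" and r s :: "'a \<Rightarrow> 'a" and c :: "'a \<Rightarrow> 'a \<Rightarrow> 'a"
    and d :: "'a \<Rightarrow> 'k::finite \<Rightarrow> nat"
    and I :: "'i set" and J K :: "'a \<Rightarrow> 'i set" and st :: "'a \<Rightarrow> 'i \<Rightarrow> 'i"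
    and e :: "'i \<Rightarrow> 'h::zero" and t tstar :: "'a \<Rightarrow> 'h \<Rightarrow> 'h"
  assumes "k_graph L r s c d"
    and "row_finite L r d"
    and "no_sources L r d"
    and "permutative_rep L r s c d I J K st e t tstar"
  shows "(\<forall>i\<in>I. \<forall>n. \<exists>!p. fst p \<in> L \<and> d (fst p) = n \<and> snd p \<in> J (fst p) \<and> st (fst p) (snd p) = i)
    \<and> (\<forall>x\<in>L. \<forall>i\<in>K x. st x (sigma_tilde_n L d J st (d x) i) = i)
    \<and> (\<forall>x\<in>L. \<forall>i\<in>J x. sigma_tilde_n L d J st (d x) (st x i) = i)
    \<and> (\<forall>x\<in>L. \<forall>i\<in>J x. prefix L r s c d x (encoding L r s c d K i) = encoding L r s c d K (st x i))
    \<and> (\<forall>n. \<forall>i\<in>I. shift n (encoding L r s c d K i) = encoding L r s c d K (sigma_tilde_n L d J st n i))"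
proof -
  interpret permutative_representation L r s c d I J K st e t tstar
    using assms(1,4) by unfold_locales
  show ?thesis
    using st_preimage_unique st_sigma_tilde_n sigma_tilde_n_st prefix_encoding shift_encoding
    by blast
qed

end
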